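(* The position operators $G_i=A_i+A_i^\dagger$, $i\geq1$, are monotone independent with respect to the vacuum state $\omega_\Omega(X)=\langle \Omega,X\Omega\rangle$ on the bounded operators on $\mathfrak F_{WM}(\mathcal H)$: if $\mathcal C_i$ denotes the non-unital $*$-algebra generated by $G_i$ (polynomials in $G_i$ without constant term), then (M1) for $i<j>k$ and $p_i\in\mathcal C_i,p_j\in\mathcal C_j,p_k\in\mathcal C_k$ one has $p_ip_jp_k=\omega_\Omega(p_j)p_ip_k$, and (M2) for $j_1>\cdots>j_k<\cdots<j_n$ and $p_{j_m}\in\mathcal C_{j_m}$ one has $\omega_\Omega(p_{j_1}\cdots p_{j_n})=\prod_{m=1}^n\omega_\Omega(p_{j_m})$.
   Context: Let $\mathcal H$ be a separable Hilbert space with a fixed orthonormal basis $\{e_i: i\geq 1\}$, and $\mathfrak F(\mathcal H)=\bigoplus_{n\ge 0}\mathcal H^{\otimes n}$ its full Fock space with vacuum vector $\Omega$. The weakly monotone Fock space $\mathfrak F_{WM}(\mathcal H)$ is the closed subspace of $\mathfrak F(\mathcal H)$ spanned by $\Omega$ and all simple tensors $e_{i_k}\otimes e_{i_{k-1}}\otimes\cdots\otimes e_{i_1}$ with $k\geq 1$ and $i_k\geq i_{k-1}\geq\cdots\geq i_1$. For $i\geq1$ the weakly monotone annihilation operator $A_i$ and creation operator $A_i^\dagger$ are the bounded operators on $\mathfrak F_{WM}(\mathcal H)$ defined on this spanning set by $A_i\Omega=0$, $A_i(e_{i_k}\otimes\cdots\otimes e_{i_1})=\delta_{i,i_k}\,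 e_{i_{k-1}}\otimes\cdots\otimes e_{i_1}$ (interpreted as $\delta_{i,i_1}\Omega$ when $k=1$), $A_i^\dagger\Omega=e_i$, and $A_i^\dagger(e_{i_k}\otimes\cdots\otimes e_{i_1})=e_i\otimes e_{i_k}\otimes\cdots\otimes e_{i_1}$ if $i\geq i_k$ and $=0$ if $i<i_k$. They are mutually adjoint, of norm one. The position operators are $G_i:=A_i+A_i^\dagger$ (self-adjoint). *)

theory Defs
  imports "HOL-Analysis.Analysis" "HOL-Computational_Algebra.Polynomial"
begin

(* Basis words: the list [i_k, ..., i_1] stands for e_{i_k} (x) ... (x) e_{i_1};
   [] stands for the vacuum Omega.  Vectors of F_WM(H) are coefficient functions
   on words (square summable, supported on weakly monotone words). *)
type_synonym vec = "nat list \<Rightarrow> complex"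

definition wm_word :: "nat list \<Rightarrow> bool" where
  "wm_word w \<longleftrightarrow> sorted_wrt (\<lambda>a b. a \<ge> b) w \<and> (\<forall>x\<in>set w. 1 \<le> x)"

definition in_Fock :: "vec \<Rightarrow> bool" where
  "in_Fock v \<longleftrightarrow> (\<forall>w. v w \<noteq> 0 \<longrightarrow> wm_word w) \<and> ((\<lambda>w. (cmod (v w))\<^sup>2) summable_on UNIV)"

definition vacuum :: vec where
  "vacuum = (\<lambda>w. if w = [] then 1 else 0)"

definition ann :: "nat \<Rightarrow> vec \<Rightarrow> vec" where
  "ann i v = (\<lambda>w. v (i # w))"

definition cre :: "nat \<Rightarrow> vec \<Rightarrow> vec" where
  "cre i v = (\<lambda>w. case w of [] \<Rightarrow> 0
      | j # w' \<Rightarrow> (if j = i \<and> (w' = [] \<or> hd w' \<le> i) then v w' else 0))"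

definition G :: "nat \<Rightarrow> vec \<Rightarrow> vec" where
  "G i v = (\<lambda>w. ann i v w + cre i v w)"

definition poly_op :: "complex poly \<Rightarrow> (vec \<Rightarrow> vec) \<Rightarrow> vec \<Rightarrow> vec" where
  "poly_op c T v = (\<lambda>w. \<Sum>n\<le>degree c. coeff c n * (T ^^ n) v w)"

definition omega :: "(vec \<Rightarrow> vec) \<Rightarrow> complex" where
  "omega X = X vacuum []"

definition prod_ops :: "(nat \<times> complex poly) list \<Rightarrow> vec \<Rightarrow> vec" where
  "prod_ops ps = foldr (\<lambda>(j, c) f. poly_op c (G j) \<circ> f) ps id"

end

theory Submission imports Defs begin

text \<open>
  A word with leading block \<open>j\<^sup>r\<close> factors as \<open>j\<^sup>r @ w'\<close>, and if the rest \<open>w'\<close> only involves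
  letters below \<open>j\<close>, the operator \<open>G\<^sub>j\<close> acts on the first factor alone. Hence for a vector \<open>u\<close>
  supported on words with head below \<open>j\<close>, \<open>p(G\<^sub>j) u = p(G\<^sub>j)\<Omega> \<otimes> u\<close>. An operator \<open>q(G\<^sub>i)\<close> with
  \<open>i < j\<close> and no constant term only sees words with head at most \<open>i\<close>, i.e. the vacuum
  component \<open>\<omega>(p(G\<^sub>j))\<close> of the first factor; this gives (M1). For (M2), each factor of the
  increasing part is absorbed into its left neighbour as in (M1), and in the decreasing part
  each factor acts on a vector supported below its index, so its vacuum component splits off.
\<close>

lemma poly_op_scale:
  assumes "\<And>a u. T (\<lambda>w. a * u w) = (\<lambda>w. a * T u w)"
  shows "poly_op c T (\<lambda>w. a * u w) = (\<lambda>w. a * poly_op c T u w)"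
proof -
  have "(T ^^ n) (\<lambda>w. a * u w) = (\<lambda>w. a * (T ^^ n) u w)" for n
    by (induction n) (simp_all add: assms)
  then show ?thesis
    by (simp add: poly_op_def sum_distrib_left mult.left_commute)
qed

lemma poly_op_eqI:
  assumes "\<And>n. 0 < n \<Longrightarrow> (T ^^ n) x = (T ^^ n) y" and "coeff c 0 = 0"
  shows "poly_op c T x = poly_op c T y"
  unfolding poly_op_def
proof (intro ext sum.cong refl)
  show "coeff c n * (T ^^ n) x w = coeff c n * (T ^^ n) y w" for n w
    using assms by (cases "n = 0") simp_all
qed

lemma poly_op_nonzero_obtains_power:
  assumes "poly_op c T u w \<noteq> 0" and "coeff c 0 = 0"
  obtains n where "0 < n" "(T ^^ n) u w \<noteq> 0"
proof -
  from assms(1) obtain n where n: "coeff c n * (T ^^ n) u w \<noteq> 0"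
    unfolding poly_op_def by (rule sum.not_neutral_contains_not_neutral)
  with assms(2) have "0 < n" by (metis gr0I mult_zero_left)
  with n that show thesis by simp
qed

lemma G_scale: "G i (\<lambda>w. a * u w) = (\<lambda>w. a * G i u w)"
  by (auto simp: G_def ann_def cre_def fun_eq_iff distrib_left split: list.splits)

lemma G_cong_hd_le:
  assumes "\<And>w. w = [] \<or> hd w \<le> i \<Longrightarrow> x w = y w"
  shows "G i x = G i y"
  using assms by (auto simp: G_def ann_def cre_def fun_eq_iff split: list.splits)

text \<open>Weaker than the support condition of \<open>in_Fock\<close> (letters may be \<open>0\<close>), and kept by every \<open>G k\<close>.\<close>

definition nonincr_supported :: "vec \<Rightarrow> bool" where
  "nonincr_supported u \<longleftrightarrow> (\<forall>w. u w \<noteq> 0 \<longrightarrow> sorted_wrt (\<ge>) w)"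

lemma in_Fock_nonincr_supported: "in_Fock v \<Longrightarrow> nonincr_supported v"
  by (simp add: in_Fock_def wm_word_def nonincr_supported_def)

lemma vacuum_nonincr_supported: "nonincr_supported vacuum"
  by (simp add: nonincr_supported_def vacuum_def)

lemma G_nonzero_sorted_hd_le:
  assumes "nonincr_supported u" and "G k u w \<noteq> 0"
  shows "sorted_wrt (\<ge>) w \<and> (w = [] \<or> hd w \<le> k)"
proof (cases "u (k # w) = 0")
  case True
  with assms(2) obtain w' where w: "w = k # w'" "w' = [] \<or> hd w' \<le> k" "u w' \<noteq> 0"
    by (auto simp: G_def ann_def cre_def split: list.splits if_splits)
  from w(3) assms(1) have sorted: "sorted_wrt (\<ge>) w'"
    by (simp add: nonincr_supported_def)
  have "x \<le> k" if "x \<in> set w'" for x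
  proof -
    from that sorted have "x \<le> hd w'"
      by (cases w') auto
    with w(2) that show ?thesis by auto
  qed
  with sorted w(1) show ?thesis by simp
next
  case False
  with assms(1) have "sorted_wrt (\<ge>) (k # w)"
    unfolding nonincr_supported_def by blast
  then show ?thesis by (cases w) auto
qed

lemma funpow_G_nonincr_supported:
  assumes "nonincr_supported u"
  shows "nonincr_supported ((G k ^^ n) u)"
proof (induction n)
  case 0
  from assms show ?case by simp
next
  case (Suc n)
  show ?case
    unfolding nonincr_supported_def
  proof (intro allI impI)
    fix w assume "(G k ^^ Suc n) u w \<noteq> 0"
    then have "G k ((G k ^^ n) u) w \<noteq> 0" by simp
    with G_nonzero_sorted_hd_le[OF Suc.IH] show "sorted_wrt (\<ge>) w" by blast
  qed
qed

lemma poly_op_G_nonincr_supported: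
  assumes "nonincr_supported u"
  shows "nonincr_supported (poly_op c (G k) u)"
  unfolding nonincr_supported_def
proof (intro allI impI)
  fix w assume "poly_op c (G k) u w \<noteq> 0"
  then obtain n where "coeff c n * (G k ^^ n) u w \<noteq> 0"
    unfolding poly_op_def by (rule sum.not_neutral_contains_not_neutral)
  then have "(G k ^^ n) u w \<noteq> 0" by simp
  with funpow_G_nonincr_supported[OF assms] show "sorted_wrt (\<ge>) w"
    unfolding nonincr_supported_def by blast
qed

lemma poly_op_G_nonzero_hd_le:
  assumes "nonincr_supported u" and "coeff c 0 = 0" and "poly_op c (G k) u w \<noteq> 0"
  shows "w = [] \<or> hd w \<le> k"
proof -
  obtain n where "0 < n" "(G k ^^ n) u w \<noteq> 0"
    using poly_op_nonzero_obtains_power[OF assms(3,2)] .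
  then obtain m where "G k ((G k ^^ m) u) w \<noteq> 0"
    by (metis Suc_pred' comp_apply funpow.simps(2))
  with funpow_G_nonincr_supported[OF assms(1)] show ?thesis
    by (blast dest: G_nonzero_sorted_hd_le)
qed

text \<open>
  \<open>block_tensor j f u\<close> is \<open>f \<otimes> u\<close> under the splitting of a word into its maximal leading block
  of letters \<open>j\<close> and the rest, \<open>f\<close> being read as a vector of the one-mode Fock space of \<open>e\<^sub>j\<close>.
\<close>

definition block_tensor :: "nat \<Rightarrow> vec \<Rightarrow> vec \<Rightarrow> vec" where
  "block_tensor j f u =
     (\<lambda>w. f (takeWhile (\<lambda>x. x = j) w) * u (dropWhile (\<lambda>x. x = j) w))"

lemma block_tensor_hd_neq:
  "w = [] \<or> hd w \<noteq> j \<Longrightarrow> block_tensor j f u w = f [] * u w"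
  by (cases w) (auto simp: block_tensor_def)

lemma G_block_tensor:
  assumes "\<And>w. u w \<noteq> 0 \<Longrightarrow> w = [] \<or> hd w \<le> j"
  shows "G j (block_tensor j f u) = block_tensor j (G j f) u"
proof (rule ext)
  fix w
  show "G j (block_tensor j f u) w = block_tensor j (G j f) u w"
  proof (cases w)
    case Nil
    then show ?thesis by (simp add: G_def ann_def cre_def block_tensor_def)
  next
    case (Cons x w')
    consider "x \<noteq> j" | "x = j" "w' = [] \<or> hd w' \<le> j" | "x = j" "w' \<noteq> []" "hd w' > j"
      by fastforce
    then show ?thesis
    proof cases
      case 1
      with Cons show ?thesis by (simp add: G_def ann_def cre_def block_tensor_def)
    next
      case 2
      have "takeWhile (\<lambda>x. x = j) w' \<noteq> [] \<Longrightarrow> hd (takeWhile (\<lambda>x. x = j) w') = j"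
        by (induction w') auto
      with 2 Cons show ?thesis
        by (auto simp: G_def ann_def cre_def block_tensor_def distrib_right)
    next
      case 3
      with assms have "u w' = 0" by force
      with 3 Cons show ?thesis
        by (cases w') (auto simp: G_def ann_def cre_def block_tensor_def)
    qed
  qed
qed

lemma poly_op_block_tensor:
  assumes "\<And>f. T (block_tensor j f u) = block_tensor j (T f) u"
  shows "poly_op c T (block_tensor j f u) = block_tensor j (poly_op c T f) u"
proof -
  have "(T ^^ n) (block_tensor j f u) = block_tensor j ((T ^^ n) f) u" for n
    by (induction n) (simp_all add: assms)
  then show ?thesis
    by (simp add: poly_op_def block_tensor_def sum_distrib_right mult.assoc)
qed

lemma block_tensor_vacuum:
  assumes "\<And>w. u w \<noteq> 0 \<Longrightarrow> w = [] \<or> hd w \<noteq> j"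
  shows "block_tensor j vacuum u = u"
proof (rule ext)
  fix w
  show "block_tensor j vacuum u w = u w"
  proof (cases "w = [] \<or> hd w \<noteq> j")
    case True
    then show ?thesis by (simp add: block_tensor_hd_neq vacuum_def)
  next
    case False
    with assms have "u w = 0" by blast
    moreover from False have "takeWhile (\<lambda>x. x = j) w \<noteq> []"
      by (cases w) auto
    ultimately show ?thesis by (simp add: block_tensor_def vacuum_def)
  qed
qed

lemma poly_op_G_eq_block_tensor:
  assumes "\<And>w. u w \<noteq> 0 \<Longrightarrow> w = [] \<or> hd w < j"
  shows "poly_op c (G j) u = block_tensor j (poly_op c (G j) vacuum) u"
proof -
  have "poly_op c (G j) u = poly_op c (G j) (block_tensor j vacuum u)"
    using block_tensor_vacuum[of u j] assms by fastforce
  also have "\<dots> = block_tensor j (poly_op c (G j) vacuum) u"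
    by (intro poly_op_block_tensor G_block_tensor) (use assms in force)
  finally show ?thesis .
qed

lemma omega_poly_op_G_factor:
  assumes "\<And>w. u w \<noteq> 0 \<Longrightarrow> w = [] \<or> hd w < j"
  shows "poly_op c (G j) u [] = omega (poly_op c (G j)) * u []"
  using poly_op_G_eq_block_tensor[OF assms, where c = c]
  by (simp add: block_tensor_def omega_def)

lemma poly_op_G_block_tensor_lower:
  assumes "i < j" and "coeff c 0 = 0"
  shows "poly_op c (G i) (block_tensor j f u) = (\<lambda>w. f [] * poly_op c (G i) u w)"
proof -
  have "G i (block_tensor j f u) = G i (\<lambda>w. f [] * u w)"
    using assms(1) by (intro G_cong_hd_le block_tensor_hd_neq) auto
  then have "poly_op c (G i) (block_tensor j f u) = poly_op c (G i) (\<lambda>w. f [] * u w)"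
    by (intro poly_op_eqI[OF _ assms(2)]) (metis funpow_Suc_right gr0_conv_Suc o_apply)
  then show ?thesis by (simp add: poly_op_scale G_scale)
qed

lemma successively_take_Suc_nthI:
  "(\<And>a. a < m \<Longrightarrow> R (xs ! a) (xs ! Suc a)) \<Longrightarrow> successively R (take (Suc m) xs)"
  by (auto simp: successively_conv_nth)

lemma successively_drop_nthI:
  "(\<And>a. m \<le> a \<Longrightarrow> Suc a < length xs \<Longrightarrow> R (xs ! a) (xs ! Suc a)) \<Longrightarrow>
    successively R (drop m xs)"
  by (auto simp: successively_conv_nth)

lemma prod_ops_Nil [simp]: "prod_ops [] = id"
  by (simp add: prod_ops_def)

lemma prod_ops_Cons [simp]: "prod_ops ((j, c) # qs) = poly_op c (G j) \<circ> prod_ops qs"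
  by (simp add: prod_ops_def)

lemma prod_ops_append: "prod_ops (xs @ ys) = prod_ops xs \<circ> prod_ops ys"
  by (induction xs) (auto simp: prod_ops_def)

lemma prod_ops_scale: "prod_ops qs (\<lambda>w. a * u w) = (\<lambda>w. a * prod_ops qs u w)"
  by (induction qs) (auto simp: poly_op_scale G_scale)

lemma prod_ops_nonincr_supported:
  "nonincr_supported u \<Longrightarrow> nonincr_supported (prod_ops qs u)"
  by (induction qs) (auto intro: poly_op_G_nonincr_supported)

definition moment :: "nat \<times> complex poly \<Rightarrow> complex" where
  "moment = (\<lambda>(j, c). omega (poly_op c (G j)))"

lemma prod_ops_decreasing_vacuum_Nil:
  assumes "successively (>) (map fst qs)" and "\<forall>(j, c)\<in>set qs. coeff c 0 = 0"
  shows "prod_ops qs vacuum [] = prod_list (map moment qs)"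
  using assms
proof (induction qs)
  case Nil
  then show ?case by (simp add: vacuum_def)
next
  case (Cons p qs)
  obtain j c where p: "p = (j, c)" by (cases p)
  define y where "y = prod_ops qs vacuum"
  have y_Nil: "y [] = prod_list (map moment qs)"
    using Cons by (cases qs) (auto simp: y_def)
  have "w = [] \<or> hd w < j" if "y w \<noteq> 0" for w
  proof (cases qs)
    case Nil
    with that show ?thesis by (simp add: y_def vacuum_def split: if_splits)
  next
    case (Cons q qs')
    obtain j' c' where q: "q = (j', c')" by (cases q)
    have "j' < j" "coeff c' 0 = 0"
      using Cons.prems p q \<open>qs = q # qs'\<close> by auto
    have "poly_op c' (G j') (prod_ops qs' vacuum) w \<noteq> 0"
      using that by (simp add: y_def q \<open>qs = q # qs'\<close>)
    then have "w = [] \<or> hd w \<le> j'"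
      using poly_op_G_nonzero_hd_le prod_ops_nonincr_supported vacuum_nonincr_supported
        \<open>coeff c' 0 = 0\<close> by blast
    with \<open>j' < j\<close> show ?thesis by auto
  qed
  then have "poly_op c (G j) y [] = omega (poly_op c (G j)) * y []"
    by (rule omega_poly_op_G_factor)
  then show ?case by (simp add: p y_def [symmetric] y_Nil moment_def)
qed

lemma prod_ops_increasing_vacuum:
  assumes "successively (<) (j0 # map fst qs)"
    and "coeff c0 0 = 0" and "\<forall>(j, c)\<in>set qs. coeff c 0 = 0"
  shows "poly_op c0 (G j0) (prod_ops qs vacuum) =
    (\<lambda>w. prod_list (map moment qs) * poly_op c0 (G j0) vacuum w)"
  using assms
proof (induction qs arbitrary: j0 c0)
  case Nil
  then show ?case by simp
next
  case (Cons p qs)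
  obtain j1 c1 where p: "p = (j1, c1)" by (cases p)
  have "j0 < j1" "coeff c1 0 = 0" using Cons.prems p by auto
  have IH: "poly_op c1 (G j1) (prod_ops qs vacuum) =
      (\<lambda>w. prod_list (map moment qs) * poly_op c1 (G j1) vacuum w)"
    using Cons.prems p by (intro Cons.IH) auto
  have "poly_op c1 (G j1) vacuum = block_tensor j1 (poly_op c1 (G j1) vacuum) vacuum"
    by (rule poly_op_G_eq_block_tensor) (simp add: vacuum_def split: if_splits)
  then have "poly_op c0 (G j0) (poly_op c1 (G j1) vacuum) =
      (\<lambda>w. poly_op c1 (G j1) vacuum [] * poly_op c0 (G j0) vacuum w)"
    by (metis poly_op_G_block_tensor_lower \<open>j0 < j1\<close> \<open>coeff c0 0 = 0\<close>)
  also have "\<dots> = (\<lambda>w. moment (j1, c1) * poly_op c0 (G j0) vacuum w)"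
    by (simp add: moment_def omega_def)
  finally have "poly_op c0 (G j0) (poly_op c1 (G j1) vacuum) =
      (\<lambda>w. moment (j1, c1) * poly_op c0 (G j0) vacuum w)" .
  with IH show ?case
    by (simp add: p poly_op_scale G_scale mult_ac)
qed

lemma omega_prod_ops_valley:
  assumes "m < length qs"
    and "successively (>) (take (Suc m) (map fst qs))"
    and "successively (<) (drop m (map fst qs))"
    and "\<forall>(j, c)\<in>set qs. coeff c 0 = 0"
  shows "omega (prod_ops qs) = prod_list (map moment qs)"
proof -
  obtain j c where x: "qs ! m = (j, c)" by fastforce
  define pre where "pre = take m qs"
  define post where "post = drop (Suc m) qs"
  have qs: "qs = pre @ (j, c) # post"
    using assms(1) x id_take_nth_drop unfolding pre_def post_def by metis
  have "take (Suc m) qs = pre @ [(j, c)]" "drop m qs = (j, c) # post"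
    using assms(1) x
    by (simp_all add: pre_def post_def take_Suc_conv_app_nth flip: Cons_nth_drop_Suc)
  then have "successively (>) (map fst (pre @ [(j, c)]))" "successively (<) (j # map fst post)"
    using assms(2,3) by (simp_all add: take_map drop_map)
  moreover have "\<forall>(j, c)\<in>set (pre @ [(j, c)]). coeff c 0 = 0" "coeff c 0 = 0"
    "\<forall>(j, c)\<in>set post. coeff c 0 = 0"
    using assms(4) qs by auto
  ultimately have dec:
      "prod_ops (pre @ [(j, c)]) vacuum [] = prod_list (map moment (pre @ [(j, c)]))"
    and inc: "poly_op c (G j) (prod_ops post vacuum) =
      (\<lambda>w. prod_list (map moment post) * poly_op c (G j) vacuum w)"
    by (simp_all only: prod_ops_decreasing_vacuum_Nil prod_ops_increasing_vacuum)
  have "omega (prod_ops qs) = prod_ops pre (poly_op c (G j) (prod_ops post vacuum)) []"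
    by (simp add: omega_def qs prod_ops_append)
  also have "\<dots> = prod_list (map moment post) * prod_ops (pre @ [(j, c)]) vacuum []"
    by (simp add: inc prod_ops_scale prod_ops_append)
  finally show ?thesis
    by (simp add: dec qs mult_ac)
qed

theorem corollary2p3:
  shows
  "(\<forall>i j k ci cj ck v.
      1 \<le> i \<and> 1 \<le> j \<and> 1 \<le> k \<and> i < j \<and> k < j \<and>
      coeff ci 0 = 0 \<and> coeff cj 0 = 0 \<and> coeff ck 0 = 0 \<and> in_Fock v \<longrightarrow>
      poly_op ci (G i) (poly_op cj (G j) (poly_op ck (G k) v)) =
      (\<lambda>w. omega (poly_op cj (G j)) * poly_op ci (G i) (poly_op ck (G k) v) w))
   \<and>
   (\<forall>js cs.
      js \<noteq> [] \<and> length cs = length js \<and> (\<forall>j\<in>set js. 1 \<le> j) \<and>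
      (\<forall>c\<in>set cs. coeff c 0 = 0) \<and>
      (\<exists>m < length js. (\<forall>a<m. js ! (a + 1) < js ! a) \<and>
                        (\<forall>a. m \<le> a \<and> a + 1 < length js \<longrightarrow> js ! a < js ! (a + 1))) \<longrightarrow>
      omega (prod_ops (zip js cs)) =
      prod_list (map (\<lambda>(j, c). omega (poly_op c (G j))) (zip js cs)))"
proof (intro conjI allI impI)
  fix i j k :: nat and ci cj ck :: "complex poly" and v :: vec
  assume H: "1 \<le> i \<and> 1 \<le> j \<and> 1 \<le> k \<and> i < j \<and> k < j \<and>
      coeff ci 0 = 0 \<and> coeff cj 0 = 0 \<and> coeff ck 0 = 0 \<and> in_Fock v"
  define u where "u = poly_op ck (G k) v"
  have "w = [] \<or> hd w < j" if "u w \<noteq> 0" for w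
  proof -
    have "w = [] \<or> hd w \<le> k"
      using H that unfolding u_def by (intro poly_op_G_nonzero_hd_le in_Fock_nonincr_supported) auto
    with H show ?thesis by auto
  qed
  then have "poly_op cj (G j) u = block_tensor j (poly_op cj (G j) vacuum) u"
    by (rule poly_op_G_eq_block_tensor)
  with H show "poly_op ci (G i) (poly_op cj (G j) (poly_op ck (G k) v)) =
      (\<lambda>w. omega (poly_op cj (G j)) * poly_op ci (G i) (poly_op ck (G k) v) w)"
    by (simp add: u_def [symmetric] poly_op_G_block_tensor_lower omega_def)
next
  fix js :: "nat list" and cs :: "complex poly list"
  assume H: "js \<noteq> [] \<and> length cs = length js \<and> (\<forall>j\<in>set js. 1 \<le> j) \<and>
      (\<forall>c\<in>set cs. coeff c 0 = 0) \<and>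
      (\<exists>m < length js. (\<forall>a<m. js ! (a + 1) < js ! a) \<and>
                        (\<forall>a. m \<le> a \<and> a + 1 < length js \<longrightarrow> js ! a < js ! (a + 1)))"
  then obtain m where m: "m < length js" "\<forall>a<m. js ! (a + 1) < js ! a"
    "\<forall>a. m \<le> a \<and> a + 1 < length js \<longrightarrow> js ! a < js ! (a + 1)"
    by blast
  have "successively (>) (take (Suc m) js)"
    using m(2) by (intro successively_take_Suc_nthI) simp
  moreover have "successively (<) (drop m js)"
    using m(3) by (intro successively_drop_nthI) simp
  moreover have "map fst (zip js cs) = js" "\<forall>(j, c)\<in>set (zip js cs). coeff c 0 = 0"
    using H by (auto dest: set_zip_rightD)
  ultimately show "omega (prod_ops (zip js cs)) =
      prod_list (map (\<lambda>(j, c). omega (poly_op c (G j))) (zip js cs))"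
    using omega_prod_ops_valley[of m "zip js cs"] m(1) H by (simp add: moment_def)
qed

end
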